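(* Let $\mathfrak{n}$ be a $2$-step nilpotent real Lie algebra whose center $\mathfrak{z}$ has $\dim\mathfrak{z}=2$. Then every complex structure on $\mathfrak{n}$ is $2$-step. In particular, if $\mathfrak{n}'=\mathfrak{z}$ and the first Betti number of $\mathfrak{n}$ satisfies $b_1=\dim\mathfrak{n}-2$, then every complex structure on $\mathfrak{n}$ is $2$-step.
   Context: A complex structure on a real Lie algebra $\mathfrak{g}$ is a linear map $J:\mathfrak{g}\to\mathfrak{g}$ with $J^2=-I$ and $N_J(x,y):=[x,y]+J([Jx,y]+[x,Jy])-[Jx,Jy]=0$ for all $x,y\in\mathfrak{g}$. Given such $J$, define inductively $\mathfrak{a}_0(J)=0$ and $\mathfrak{a}_\ell(J)=\{x\in\mathfrak{g}: [x,\mathfrak{g}]\subset\mathfrak{a}_{\ell-1}(J)\text{ and }[Jx,\mathfrak{g}]\subset\mathfrak{a}_{\ell-1}(J)\}$ for $\ell\ge1$. $J$ is called nilpotent if $\mathfrak{a}_t(J)=\mathfrak{g}$ for some positive integer $t$, and $t$-step if $t$ is the smallest such integer. A Lie algebra $\mathfrak{n}$ is $2$-step nilpotent if it is non-abelian and $\mathfrak{n}'=[\mathfrak{n},\mathfrak{n}]\subset\mathfrak{z}$. The first Betti number is $b_1=\dim\mathfrak{n}-\dim\mathfrak{n}'$. *)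

theory Defs
  imports "HOL-Analysis.Analysis"
begin

text \<open>A finite-dimensional real Lie algebra is modelled as a type of class
euclidean_space (any finite-dimensional real vector space) with a bracket.\<close>

definition lie_algebra :: "('a::euclidean_space \<Rightarrow> 'a \<Rightarrow> 'a) \<Rightarrow> bool" where
  "lie_algebra br \<longleftrightarrow> bilinear br \<and> (\<forall>x. br x x = 0) \<and>
     (\<forall>x y z. br x (br y z) + br y (br z x) + br z (br x y) = 0)"

definition lie_center :: "('a::euclidean_space \<Rightarrow> 'a \<Rightarrow> 'a) \<Rightarrow> 'a set" where
  "lie_center br = {x. \<forall>y. br x y = 0}"

definition derived_algebra :: "('a::euclidean_space \<Rightarrow> 'a \<Rightarrow> 'a) \<Rightarrow> 'a set" where
  "derived_algebra br = span {br x y | x y. True}"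

definition two_step_nilpotent :: "('a::euclidean_space \<Rightarrow> 'a \<Rightarrow> 'a) \<Rightarrow> bool" where
  "two_step_nilpotent br \<longleftrightarrow> (\<exists>x y. br x y \<noteq> 0) \<and> derived_algebra br \<subseteq> lie_center br"

definition first_betti :: "('a::euclidean_space \<Rightarrow> 'a \<Rightarrow> 'a) \<Rightarrow> nat" where
  "first_betti br = DIM('a) - dim (derived_algebra br)"

definition complex_structure :: "('a::euclidean_space \<Rightarrow> 'a \<Rightarrow> 'a) \<Rightarrow> ('a \<Rightarrow> 'a) \<Rightarrow> bool" where
  "complex_structure br J \<longleftrightarrow> linear J \<and> (\<forall>x. J (J x) = - x) \<and>
     (\<forall>x y. br x y + J (br (J x) y + br x (J y)) - br (J x) (J y) = 0)"

primrec asc_series :: "('a::euclidean_space \<Rightarrow> 'a \<Rightarrow> 'a) \<Rightarrow> ('a \<Rightarrow> 'a) \<Rightarrow> nat \<Rightarrow> 'a set" where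
  "asc_series br J 0 = {0}"
| "asc_series br J (Suc l) = {x. (\<forall>y. br x y \<in> asc_series br J l) \<and> (\<forall>y. br (J x) y \<in> asc_series br J l)}"

definition step_nilpotent_cs :: "('a::euclidean_space \<Rightarrow> 'a \<Rightarrow> 'a) \<Rightarrow> ('a \<Rightarrow> 'a) \<Rightarrow> nat \<Rightarrow> bool" where
  "step_nilpotent_cs br J t \<longleftrightarrow> 0 < t \<and> asc_series br J t = UNIV \<and>
     (\<forall>s. 0 < s \<and> s < t \<longrightarrow> asc_series br J s \<noteq> UNIV)"

end

theory Submission
  imports Defs
begin

text \<open>For c in the centre \<open>\<zz>\<close> the Nijenhuis condition reduces to
  J[Jc, y] = [Jc, Jy]; as all brackets are central, [Jc, y] lies in
  \<open>\<zz> \<inter> J\<^sup>-\<^sup>1\<zz>\<close>, the largest J-invariant subspace of \<open>\<zz>\<close>.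
  Since J has no real eigenvectors, a J-invariant subspace of the plane \<open>\<zz>\<close>
  is 0 or \<open>\<zz>\<close>; in both cases Jc is central. Thus \<open>\<aa>\<^sub>1(J) = \<zz>\<close>, which
  contains all brackets, so \<open>\<aa>\<^sub>2(J)\<close> is everything, while \<open>\<aa>\<^sub>1(J)\<close> is not
  because the algebra is non-abelian. For the second claim,
  \<open>\<nn>' = \<zz>\<close> and \<open>b\<^sub>1 = dim \<nn> - 2\<close> force \<open>dim \<zz> = 2\<close>.\<close>

lemma complex_structure_not_in_span_singleton:
  fixes J :: "'a::euclidean_space \<Rightarrow> 'a"
  assumes "linear J" and JJ: "J (J a) = - a" and "a \<noteq> 0"
  shows "J a \<notin> span {a}"
proof
  assume "J a \<in> span {a}"
  then obtain k where k: "J a = k *\<^sub>R a" by (auto simp: span_singleton)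
  have "- a = (k * k) *\<^sub>R a"
    using JJ k linear_cmul[OF \<open>linear J\<close>] by simp
  then have "(k * k + 1) *\<^sub>R a = 0"
    by (simp add: scaleR_add_left) (metis add.commute neg_eq_iff_add_eq_0)
  moreover have "k * k + 1 \<noteq> 0" by (smt (verit) zero_le_square)
  ultimately show False using \<open>a \<noteq> 0\<close> by simp
qed

lemma complex_structure_invariant_part_of_plane:
  fixes J :: "'a::euclidean_space \<Rightarrow> 'a"
  assumes lJ: "linear J" and JJ: "\<And>x. J (J x) = - x"
    and Z: "subspace Z" "dim Z = 2"
  shows "J ` Z \<subseteq> Z \<or> {x \<in> Z. J x \<in> Z} = {0}"
proof (rule disjCI)
  let ?A = "{x \<in> Z. J x \<in> Z}"
  assume "?A \<noteq> {0}"
  moreover have "0 \<in> ?A" using Z(1) linear_0[OF lJ] by (simp add: subspace_0)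
  ultimately obtain a where a: "a \<in> ?A" "a \<noteq> 0" by blast
  have Ja: "J a \<in> ?A" using a(1) JJ Z(1) by (simp add: subspace_neg)
  have "subspace ?A"
    using Z(1) linear_add[OF lJ] linear_cmul[OF lJ] linear_0[OF lJ]
    by (simp add: subspace_def)
  have nsp: "J a \<notin> span {a}"
    using complex_structure_not_in_span_singleton[OF lJ JJ a(2)] .
  then have ind: "independent {J a, a}" using a(2) by (simp add: independent_insertI)
  have "J a \<noteq> a" using nsp by (metis span_base singletonI)
  then have "dim Z \<le> card {J a, a}" using Z(2) by simp
  then have "Z \<subseteq> span {J a, a}"
    using a(1) Ja ind by (intro card_ge_dim_independent) auto
  also have "\<dots> \<subseteq> ?A" using a(1) Ja \<open>subspace ?A\<close> by (simp add: span_minimal)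
  finally show "J ` Z \<subseteq> Z" by blast
qed

lemma subspace_lie_center:
  assumes "bilinear br"
  shows "subspace (lie_center br)"
proof -
  have l: "linear (\<lambda>x. br x y)" for y using assms by (simp add: bilinear_def)
  show ?thesis
    unfolding subspace_def lie_center_def
    using linear_add[OF l] linear_cmul[OF l] linear_0[OF l] by auto
qed

lemma two_step_nilpotent_bracket_in_center:
  assumes "two_step_nilpotent br"
  shows "br u v \<in> lie_center br"
proof -
  have "br u v \<in> derived_algebra br"
    unfolding derived_algebra_def by (rule span_base) blast
  then show ?thesis using assms unfolding two_step_nilpotent_def by blast
qed

lemma two_step_nilpotent_center_neq_UNIV:
  assumes "two_step_nilpotent br"
  shows "lie_center br \<noteq> UNIV"
  using assms by (auto simp: two_step_nilpotent_def lie_center_def)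

lemma complex_structure_bracket_J_center:
  assumes "complex_structure br J" and "c \<in> lie_center br"
  shows "J (br (J c) y) = br (J c) (J y)"
proof -
  have "br c y = 0" "br c (J y) = 0" using assms(2) by (auto simp: lie_center_def)
  moreover have "br c y + J (br (J c) y + br c (J y)) - br (J c) (J y) = 0"
    using assms(1) by (simp add: complex_structure_def)
  ultimately show ?thesis by simp
qed

lemma complex_structure_center_invariant:
  fixes br :: "'a::euclidean_space \<Rightarrow> 'a \<Rightarrow> 'a"
  assumes la: "lie_algebra br" and ts: "two_step_nilpotent br"
    and dz: "dim (lie_center br) = 2" and cs: "complex_structure br J"
    and c: "c \<in> lie_center br"
  shows "J c \<in> lie_center br"
proof -
  let ?Z = "lie_center br"
  have lJ: "linear J" and JJ: "\<And>x. J (J x) = - x"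
    using cs by (auto simp: complex_structure_def)
  have "subspace ?Z" using la by (simp add: lie_algebra_def subspace_lie_center)
  have bracket_in_part: "br (J c) y \<in> {x \<in> ?Z. J x \<in> ?Z}" for y
    using complex_structure_bracket_J_center[OF cs c]
      two_step_nilpotent_bracket_in_center[OF ts] by simp
  from complex_structure_invariant_part_of_plane[OF lJ JJ \<open>subspace ?Z\<close> dz]
  show ?thesis
  proof
    assume "J ` ?Z \<subseteq> ?Z"
    then show ?thesis using c by blast
  next
    assume "{x \<in> ?Z. J x \<in> ?Z} = {0}"
    then have "br (J c) y = 0" for y using bracket_in_part[of y] by blast
    then show ?thesis by (simp add: lie_center_def)
  qed
qed

lemma asc_series_one:
  "asc_series br J 1 = {x. x \<in> lie_center br \<and> J x \<in> lie_center br}"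
  by (simp add: lie_center_def)

lemma step_nilpotent_cs_two_iff:
  "step_nilpotent_cs br J 2 \<longleftrightarrow> asc_series br J 2 = UNIV \<and> asc_series br J 1 \<noteq> UNIV"
  unfolding step_nilpotent_cs_def less_2_cases_iff One_nat_def
  by (auto simp del: asc_series.simps)

lemma two_step_nilpotent_complex_structure_two_step:
  fixes br :: "'a::euclidean_space \<Rightarrow> 'a \<Rightarrow> 'a"
  assumes la: "lie_algebra br" and ts: "two_step_nilpotent br"
    and dz: "dim (lie_center br) = 2" and cs: "complex_structure br J"
  shows "step_nilpotent_cs br J 2"
proof -
  have "br u v \<in> asc_series br J 1" for u v
    using asc_series_one two_step_nilpotent_bracket_in_center[OF ts]
      complex_structure_center_invariant[OF la ts dz cs] by blast
  then have "asc_series br J 2 = UNIV"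
    by (simp add: numeral_2_eq_2 del: asc_series.simps(2)) (simp add: lie_center_def)
  moreover have "asc_series br J 1 \<noteq> UNIV"
    using asc_series_one two_step_nilpotent_center_neq_UNIV[OF ts] by blast
  ultimately show ?thesis by (simp add: step_nilpotent_cs_two_iff)
qed

text \<open>The subtraction in \<open>first_betti\<close> truncates, so the case
  \<open>DIM('a) < 2\<close> is excluded via the non-abelian hypothesis.\<close>
lemma dim_center_eq_2_if_first_betti:
  fixes br :: "'a::euclidean_space \<Rightarrow> 'a \<Rightarrow> 'a"
  assumes la: "lie_algebra br" and ts: "two_step_nilpotent br"
    and dc: "derived_algebra br = lie_center br"
    and b1: "first_betti br = DIM('a) - 2"
  shows "dim (lie_center br) = 2"
proof (rule ccontr)
  assume ne: "dim (lie_center br) \<noteq> 2"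
  have "dim (lie_center br) \<le> DIM('a)" by (rule dim_subset_UNIV)
  with ne b1 dc have "dim (lie_center br) = DIM('a)" by (simp add: first_betti_def)
  then have "span (lie_center br) = UNIV" by (simp add: dim_eq_full)
  moreover have "subspace (lie_center br)"
    using la by (simp add: lie_algebra_def subspace_lie_center)
  ultimately show False
    using two_step_nilpotent_center_neq_UNIV[OF ts] by (metis span_eq_iff)
qed

theorem mainTheorem5:
  fixes br :: "'a::euclidean_space \<Rightarrow> 'a \<Rightarrow> 'a"
  assumes "lie_algebra br" and "two_step_nilpotent br"
  shows "(dim (lie_center br) = 2 \<longrightarrow>
            (\<forall>J. complex_structure br J \<longrightarrow> step_nilpotent_cs br J 2)) \<and>
         (derived_algebra br = lie_center br \<and> first_betti br = DIM('a) - 2 \<longrightarrow>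
            (\<forall>J. complex_structure br J \<longrightarrow> step_nilpotent_cs br J 2))"
  using two_step_nilpotent_complex_structure_two_step[OF assms]
    dim_center_eq_2_if_first_betti[OF assms] by blast

end
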